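(* Let $g\colon\mathbb X\to\mathbb Y$ be continuously differentiable, $D\subset\mathbb Y$ closed, $\Phi(x):=g(x)-D$, $(\bar x,0)\in\operatorname{gph}\Phi$, $u\in\mathbb S_{\mathbb X}$, and let $\{e_1,\dots,e_m\}$ be an orthonormal basis of $\mathbb Y$. Then $\Phi$ is quasi-normal in direction $u$ at $(\bar x,0)$ w.r.t. $\{e_1,\dots,e_m\}$ if and only if there does not exist a nonzero $\lambda\in\mathcal N_D(g(\bar x);\nabla g(\bar x)u)$ with $\nabla g(\bar x)^*\lambda=0$ for which there are sequences $\{x_k\}\subset\mathbb X$ with $x_k\ne\bar x$, $\{z_k\}\subset D$, $\{\lambda_k\}\subset\mathbb Y$ with $x_k\to\bar x$, $z_k\to g(\bar x)$, $\lambda_k\to\lambda$, $(x_k-\bar x)/\|x_k-\bar x\|\to u$, $(z_k-g(\bar x))/\|x_k-\bar x\|\to\nabla g(\bar x)u$, and, for all $k$ and $i$, $\lambda_k\in\widehat{\mathcal N}_D(z_k)$ and $\langle\lambda,e_i\rangle\langle g(x_k)-z_k,e_i\rangle>0$ whenever $\langle\lambda,e_i\rangle\ne0$.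
   Context: $\nabla g(\bar x)$ is the derivative (linear map), $\nabla g(\bar x)^*$ its adjoint. $\widehat{\mathcal N}_D$ regular normal cone, $\mathcal N_D(y;v)$ directional limiting normal cone (all limits of $\eta_k\in\widehat{\mathcal N}_D(y+t_kv_k)$ with $v_k\to v$, $t_k\searrow0$). Quasi-normality in direction $u$ at $(\bar x,\bar y)$ w.r.t. $\{e_i\}$: there is no nonzero $\lambda$ with $0\in D^*\Phi((\bar x,\bar y);(u,0))(\lambda)$ (directional limiting coderivative, i.e. $(0,-\lambda)\in\mathcal N_{\operatorname{gph}\Phi}((\bar x,\bar y);(u,0))$) for which there exist $\{(x_k,y_k)\}\subset\operatorname{gph}\Phi$ with $x_k\ne\bar x$, $\{\lambda_k\}\subset\mathbb Y$, $\{\eta_k\}\subset\mathbb X$ with $x_k\to\bar x$, $y_k\to\bar y$, $\lambda_k\to\lambda$, $\eta_k\to0$, $(x_k-\bar x)/\|x_k-\bar x\|\to u$, $(y_k-\bar y)/\|x_k-\bar x\|\to0$, $\eta_k\in\widehat D^*\Phi(x_k,y_k)(\lambda_k)$ (regular coderivative), and $\langle\lambda,e_i\rangle\langle y_k-\bar y,e_i\rangle>0$ whenever $\langle\lambda,e_i\rangle\ne0$. *)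

theory Defs
  imports "HOL-Analysis.Analysis"
begin

definition rnormal :: "'a::real_inner set \<Rightarrow> 'a \<Rightarrow> 'a set" where
  "rnormal D y = {v. y \<in> D \<and>
     (\<forall>\<epsilon>>0. \<exists>\<delta>>0. \<forall>y'\<in>D. norm (y' - y) < \<delta> \<longrightarrow> inner v (y' - y) \<le> \<epsilon> * norm (y' - y))}"

definition dlnormal :: "'a::real_inner set \<Rightarrow> 'a \<Rightarrow> 'a \<Rightarrow> 'a set" where
  "dlnormal D y v = {\<eta>. \<exists>(t::nat \<Rightarrow> real) vs \<eta>s.
      (\<forall>k. t k > 0) \<and> t \<longlonglongrightarrow> 0 \<and> vs \<longlonglongrightarrow> v \<and> \<eta>s \<longlonglongrightarrow> \<eta> \<and>
      (\<forall>k. \<eta>s k \<in> rnormal D (y + t k *\<^sub>R vs k))}"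

definition gph :: "('a \<Rightarrow> 'b set) \<Rightarrow> ('a \<times> 'b) set" where
  "gph \<Phi> = {(x, y). y \<in> \<Phi> x}"

definition rcoderiv :: "('a::real_inner \<Rightarrow> 'b::real_inner set) \<Rightarrow> 'a \<Rightarrow> 'b \<Rightarrow> 'b \<Rightarrow> 'a set" where
  "rcoderiv \<Phi> x y lam = {\<eta>. (\<eta>, - lam) \<in> rnormal (gph \<Phi>) (x, y)}"

definition dlcoderiv :: "('a::real_inner \<Rightarrow> 'b::real_inner set) \<Rightarrow> 'a \<Rightarrow> 'b \<Rightarrow> 'a \<Rightarrow> 'b \<Rightarrow> 'b \<Rightarrow> 'a set" where
  "dlcoderiv \<Phi> x y u v lam = {\<eta>. (\<eta>, - lam) \<in> dlnormal (gph \<Phi>) (x, y) (u, v)}"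

definition quasi_normal_dir ::
  "('a::real_inner \<Rightarrow> 'b::real_inner set) \<Rightarrow> 'a \<Rightarrow> 'b \<Rightarrow> 'a \<Rightarrow> (nat \<Rightarrow> 'b) \<Rightarrow> nat \<Rightarrow> bool" where
  "quasi_normal_dir \<Phi> xb yb u e m \<longleftrightarrow>
    \<not> (\<exists>lam. lam \<noteq> 0 \<and> 0 \<in> dlcoderiv \<Phi> xb yb u 0 lam \<and>
        (\<exists>xs ys lams \<eta>s.
           (\<forall>k. (xs k, ys k) \<in> gph \<Phi> \<and> xs k \<noteq> xb) \<and>
           xs \<longlonglongrightarrow> xb \<and> ys \<longlonglongrightarrow> yb \<and> lams \<longlonglongrightarrow> lam \<and> \<eta>s \<longlonglongrightarrow> 0 \<and>
           (\<lambda>k. (1 / norm (xs k - xb)) *\<^sub>R (xs k - xb)) \<longlonglongrightarrow> u \<and>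
           (\<lambda>k. (1 / norm (xs k - xb)) *\<^sub>R (ys k - yb)) \<longlonglongrightarrow> 0 \<and>
           (\<forall>k. \<eta>s k \<in> rcoderiv \<Phi> (xs k) (ys k) (lams k)) \<and>
           (\<forall>k. \<forall>i<m. inner lam (e i) \<noteq> 0 \<longrightarrow> inner lam (e i) * inner (ys k - yb) (e i) > 0)))"

end

theory Submission
  imports Defs
begin

text \<open>The graph of \<open>\<Phi>\<close> is the preimage of \<open>D\<close> under \<open>(x, y) \<mapsto> g x - y\<close>, a map whose
  derivative is onto. Hence the regular normals to the graph at \<open>(x, y)\<close> are exactly the pairs
  \<open>(\<nabla>g(x)\<^sup>* \<lambda>, -\<lambda>)\<close> with \<open>\<lambda>\<close> a regular normal to \<open>D\<close> at \<open>g x - y\<close>. Passing to limits along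
  \<open>t\<^sub>k \<searrow> 0\<close> and using the continuity of \<open>\<nabla>g\<close>, the condition \<open>0 \<in> D\<^sup>*\<Phi>((x\<^sub>0, y\<^sub>0); (u, 0))(\<lambda>)\<close>
  becomes \<open>\<lambda> \<in> N\<^sub>D(g x\<^sub>0 - y\<^sub>0; \<nabla>g(x\<^sub>0) u)\<close> together with \<open>\<nabla>g(x\<^sub>0)\<^sup>* \<lambda> = 0\<close>, and the sequences
  witnessing a failure of quasi-normality correspond to each other via \<open>z\<^sub>k = g(x\<^sub>k) - y\<^sub>k\<close> and
  \<open>\<eta>\<^sub>k = \<nabla>g(x\<^sub>k)\<^sup>* \<lambda>\<^sub>k\<close>, the latter tending to \<open>\<nabla>g(x\<^sub>0)\<^sup>* \<lambda> = 0\<close>.\<close>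

lemma rnormal_iff_eventually:
  "v \<in> rnormal S p \<longleftrightarrow>
    p \<in> S \<and> (\<forall>\<epsilon>>0. \<forall>\<^sub>F q in nhds p. q \<in> S \<longrightarrow> inner v (q - p) \<le> \<epsilon> * norm (q - p))"
  unfolding rnormal_def eventually_nhds_metric dist_norm by blast

lemma has_derivative_at_eventually:
  assumes "(f has_derivative f') (at x)" and "e > 0"
  shows "\<forall>\<^sub>F y in nhds x. norm (f y - f x - f' (y - x)) \<le> e * norm (y - x)"
  using assms unfolding has_derivative_at_alt eventually_nhds_metric dist_norm by blast

lemma rnormal_pullback:
  fixes F :: "'a::real_inner \<Rightarrow> 'b::real_inner"
  assumes deriv: "(F has_derivative F') (at p)"
    and "p \<in> S" and maps: "\<And>q. q \<in> S \<Longrightarrow> F q \<in> D"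
    and normal: "l \<in> rnormal D (F p)"
    and dual: "\<And>h. inner v h = inner l (F' h)"
  shows "v \<in> rnormal S p"
proof -
  obtain K where K: "K > 0" "\<And>h. norm (F' h) \<le> norm h * K"
    using deriv bounded_linear.pos_bounded has_derivative_bounded_linear by blast
  have "linear F'"
    using deriv has_derivative_linear by blast
  have "\<forall>\<^sub>F q in nhds p. q \<in> S \<longrightarrow> inner v (q - p) \<le> \<epsilon> * norm (q - p)" if "\<epsilon> > 0" for \<epsilon>
  proof -
    define c where "c = K + 1 + norm l"
    define e where "e = min 1 (\<epsilon> / c)"
    have "c > 0"
      using K(1) by (simp add: c_def add_pos_nonneg)
    then have e: "e > 0" "e \<le> 1" "e * c \<le> \<epsilon>"
      using \<open>\<epsilon> > 0\<close> by (auto simp: e_def pos_le_divide_eq[symmetric])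
    have "\<forall>\<^sub>F z in nhds (F p). z \<in> D \<longrightarrow> inner l (z - F p) \<le> e * norm (z - F p)"
      using normal e by (simp add: rnormal_iff_eventually)
    moreover have "filterlim F (nhds (F p)) (nhds p)"
      using has_derivative_continuous[OF deriv] by (simp add: isCont_def tendsto_at_iff_tendsto_nhds)
    ultimately have close_D: "\<forall>\<^sub>F q in nhds p. F q \<in> D \<longrightarrow> inner l (F q - F p) \<le> e * norm (F q - F p)"
      by (rule eventually_compose_filterlim)
    show ?thesis
      using close_D has_derivative_at_eventually[OF deriv \<open>e > 0\<close>]
    proof eventually_elim
      case (elim q)
      define r where "r = F q - F p - F' (q - p)"
      show ?case
      proof
        assume "q \<in> S"
        have "norm (F q - F p) \<le> norm (F' (q - p)) + norm r"
          by (metis r_def diff_add_cancel norm_triangle_ineq add.commute)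
        also have "\<dots> \<le> (K + 1) * norm (q - p)"
        proof -
          have "norm r \<le> norm (q - p)"
            using elim(2) e mult_left_le_one_le[of "norm (q - p)" e] by (simp add: r_def)
          then show ?thesis
            using K(2)[of "q - p"] by (simp add: algebra_simps)
        qed
        finally have "e * norm (F q - F p) \<le> e * ((K + 1) * norm (q - p))"
          using e(1) by (simp add: mult_left_mono)
        then have image_term: "inner l (F q - F p) \<le> e * ((K + 1) * norm (q - p))"
          using elim(1) maps[OF \<open>q \<in> S\<close>] by linarith
        have "- inner l r \<le> norm l * norm r"
          using norm_cauchy_schwarz[of l "-r"] by simp
        also have "\<dots> \<le> norm l * (e * norm (q - p))"
          using elim(2) by (simp add: r_def mult_left_mono)
        finally have remainder_term: "- inner l r \<le> norm l * (e * norm (q - p))" .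
        have "e * ((K + 1) * norm (q - p)) + norm l * (e * norm (q - p)) = e * c * norm (q - p)"
          by (simp add: c_def algebra_simps)
        with image_term remainder_term
        have "inner l (F q - F p) - inner l r \<le> e * c * norm (q - p)"
          by linarith
        also have "\<dots> \<le> \<epsilon> * norm (q - p)"
          using e(3) by (simp add: mult_right_mono)
        finally show "inner v (q - p) \<le> \<epsilon> * norm (q - p)"
          by (simp add: dual r_def inner_diff_right linear_diff[OF \<open>linear F'\<close>])
      qed
    qed
  qed
  then show ?thesis
    using \<open>p \<in> S\<close> by (simp add: rnormal_iff_eventually)
qed

lemma rnormal_tangent_le:
  assumes normal: "v \<in> rnormal S p"
    and t: "\<And>k. t k > 0" "t \<longlonglongrightarrow> 0" and w: "w \<longlonglongrightarrow> d"
    and in_S: "\<And>k. p + t k *\<^sub>R w k \<in> S"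
  shows "inner v d \<le> 0"
proof (rule field_le_epsilon)
  fix \<epsilon> :: real assume "\<epsilon> > 0"
  define e where "e = \<epsilon> / (norm d + 1)"
  have e: "e > 0" "e * norm d \<le> \<epsilon>"
    using \<open>\<epsilon> > 0\<close> add_nonneg_pos[of "norm d" 1] by (simp_all add: e_def divide_le_eq)
  have "\<forall>\<^sub>F q in nhds p. q \<in> S \<longrightarrow> inner v (q - p) \<le> e * norm (q - p)"
    using normal e(1) by (simp add: rnormal_iff_eventually)
  moreover have "(\<lambda>k. p + t k *\<^sub>R w k) \<longlonglongrightarrow> p"
    using tendsto_add[OF tendsto_const tendsto_scaleR[OF t(2) w]] by simp
  ultimately have "\<forall>\<^sub>F k in sequentially. inner v (t k *\<^sub>R w k) \<le> e * norm (t k *\<^sub>R w k)"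
    using in_S by (auto dest: eventually_compose_filterlim)
  then have "\<forall>\<^sub>F k in sequentially. inner v (w k) \<le> e * norm (w k)"
  proof eventually_elim
    case (elim k)
    then have "t k * inner v (w k) \<le> t k * (e * norm (w k))"
      using t(1)[of k] by (simp add: abs_of_pos mult.left_commute)
    then show ?case
      using t(1)[of k] by simp
  qed
  moreover have "(\<lambda>k. inner v (w k)) \<longlonglongrightarrow> inner v d" "(\<lambda>k. e * norm (w k)) \<longlonglongrightarrow> e * norm d"
    by (intro tendsto_intros w)+
  ultimately have "inner v d \<le> e * norm d"
    using tendsto_le[OF sequentially_bot] by blast
  with e show "inner v d \<le> 0 + \<epsilon>" by simp
qed

lemma has_derivative_imp_dir_quotient_tendsto:
  assumes deriv: "(f has_derivative f') (at x)"
    and t: "\<And>k. t k > 0" "t \<longlonglongrightarrow> 0" and w: "w \<longlonglongrightarrow> d"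
  shows "(\<lambda>k. (1 / t k) *\<^sub>R (f (x + t k *\<^sub>R w k) - f x)) \<longlonglongrightarrow> f' d"
proof -
  define \<rho> where "\<rho> h = norm (f (x + h) - f x - f' h) / norm h" for h
  have lin: "linear f'" and "\<rho> \<midarrow>0\<rightarrow> 0"
    using deriv unfolding has_derivative_at \<rho>_def by (auto intro: bounded_linear.linear)
  \<comment> \<open>\<open>\<rho> 0 = 0\<close> because division by zero yields zero\<close>
  then have "isCont \<rho> 0"
    by (simp add: isCont_def \<rho>_def)
  moreover have "(\<lambda>k. t k *\<^sub>R w k) \<longlonglongrightarrow> 0"
    using tendsto_scaleR[OF t(2) w] by simp
  ultimately have "(\<lambda>k. \<rho> (t k *\<^sub>R w k)) \<longlonglongrightarrow> \<rho> 0"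
    by (rule isCont_tendsto_compose)
  then have "(\<lambda>k. norm (w k) * \<rho> (t k *\<^sub>R w k)) \<longlonglongrightarrow> norm d * 0"
    by (intro tendsto_intros w) (simp add: \<rho>_def)
  moreover have "norm ((1 / t k) *\<^sub>R (f (x + t k *\<^sub>R w k) - f x) - f' (w k))
      = norm (w k) * \<rho> (t k *\<^sub>R w k)" for k
  proof -
    have "(1 / t k) *\<^sub>R (f (x + t k *\<^sub>R w k) - f x) - f' (w k)
        = (1 / t k) *\<^sub>R (f (x + t k *\<^sub>R w k) - f x - f' (t k *\<^sub>R w k))"
      using t(1)[of k] by (simp add: linear_scale[OF lin] scaleR_diff_right)
    then show ?thesis
      using t(1)[of k] by (cases "w k = 0") (simp_all add: \<rho>_def linear_0[OF lin])
  qed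
  ultimately have "(\<lambda>k. norm ((1 / t k) *\<^sub>R (f (x + t k *\<^sub>R w k) - f x) - f' (w k))) \<longlonglongrightarrow> 0"
    by simp
  then have "(\<lambda>k. (1 / t k) *\<^sub>R (f (x + t k *\<^sub>R w k) - f x) - f' (w k)) \<longlonglongrightarrow> 0"
    by (rule tendsto_norm_zero_cancel)
  moreover have "(\<lambda>k. f' (w k)) \<longlonglongrightarrow> f' d"
    using bounded_linear.tendsto[OF has_derivative_bounded_linear[OF deriv] w] .
  ultimately show ?thesis
    using tendsto_add by fastforce
qed

lemma has_derivative_imp_seq_quotient_tendsto:
  assumes deriv: "(f has_derivative f') (at x)"
    and xs: "\<And>k. xs k \<noteq> x" "xs \<longlonglongrightarrow> x"
    and dir: "(\<lambda>k. (1 / norm (xs k - x)) *\<^sub>R (xs k - x)) \<longlonglongrightarrow> d"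
  shows "(\<lambda>k. (1 / norm (xs k - x)) *\<^sub>R (f (xs k) - f x)) \<longlonglongrightarrow> f' d"
proof -
  define t where "t = (\<lambda>k. norm (xs k - x))"
  have t_pos: "t k > 0" for k
    using xs(1)[of k] by (simp add: t_def)
  have "t \<longlonglongrightarrow> 0"
    using tendsto_norm_zero[OF LIM_zero[OF xs(2)]] by (simp add: t_def)
  from has_derivative_imp_dir_quotient_tendsto[OF deriv t_pos this dir[folded t_def]]
  show ?thesis
    using t_pos by (simp add: t_def)
qed

lemma adjoint_eq_sum_Basis:
  fixes f :: "'a::euclidean_space \<Rightarrow> 'b::euclidean_space"
  assumes "linear f"
  shows "adjoint f y = (\<Sum>b\<in>Basis. inner (f b) y *\<^sub>R b)"
  by (subst euclidean_representation[symmetric])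
    (simp add: adjoint_works[OF assms] inner_commute)

lemma tendsto_adjoint_blinfun:
  fixes A :: "nat \<Rightarrow> 'a::euclidean_space \<Rightarrow>\<^sub>L 'b::euclidean_space"
  assumes "A \<longlonglongrightarrow> A0" and "y \<longlonglongrightarrow> y0"
  shows "(\<lambda>k. adjoint (blinfun_apply (A k)) (y k)) \<longlonglongrightarrow> adjoint (blinfun_apply A0) y0"
proof -
  have "(\<lambda>k. \<Sum>b\<in>Basis. inner (A k b) (y k) *\<^sub>R b) \<longlonglongrightarrow> (\<Sum>b\<in>Basis. inner (A0 b) y0 *\<^sub>R b)"
    by (intro tendsto_intros blinfun.tendsto assms)
  then show ?thesis
    by (simp add: adjoint_eq_sum_Basis blinfun.bounded_linear_right bounded_linear.linear)
qed

lemma mem_gph_iff: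
  fixes g :: "'a \<Rightarrow> 'b::ab_group_add"
  assumes Phi: "\<And>x. \<Phi> x = (\<lambda>d. g x - d) ` D"
  shows "(x, y) \<in> gph \<Phi> \<longleftrightarrow> g x - y \<in> D"
proof
  assume "(x, y) \<in> gph \<Phi>"
  then obtain d where "d \<in> D" "y = g x - d"
    by (auto simp: gph_def Phi)
  then show "g x - y \<in> D"
    by simp
next
  assume "g x - y \<in> D"
  then show "(x, y) \<in> gph \<Phi>"
    by (auto simp: gph_def Phi intro!: image_eqI[where x="g x - y"])
qed

lemma rnormal_gph_imp_inner_le:
  fixes g :: "'a::real_inner \<Rightarrow> 'b::real_inner"
  assumes deriv: "(g has_derivative G) (at x)"
    and Phi: "\<And>x. \<Phi> x = (\<lambda>d. g x - d) ` D"
    and normal: "(\<eta>, -l) \<in> rnormal (gph \<Phi>) (x, y)"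
  shows "inner \<eta> h \<le> inner l (G h)"
proof -
  define t where "t = (\<lambda>k. inverse (real (Suc k)))"
  define w where "w = (\<lambda>k. (h, (1 / t k) *\<^sub>R (g (x + t k *\<^sub>R h) - g x)))"
  have t: "\<And>k. t k > 0" "t \<longlonglongrightarrow> 0"
    unfolding t_def using LIMSEQ_inverse_real_of_nat by simp_all
  have "(x, y) \<in> gph \<Phi>"
    using normal by (simp add: rnormal_def)
  then have in_gph: "(x, y) + t k *\<^sub>R w k \<in> gph \<Phi>" for k
    using t(1)[of k] by (simp add: mem_gph_iff[OF Phi] w_def algebra_simps)
  have "w \<longlonglongrightarrow> (h, G h)"
    unfolding w_def
    by (intro tendsto_Pair tendsto_const has_derivative_imp_dir_quotient_tendsto[OF deriv t])
  then have "inner (\<eta>, -l) (h, G h) \<le> 0"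
    using in_gph by (rule rnormal_tangent_le[OF normal t])
  then show ?thesis
    by simp
qed

lemma rnormal_gph_iff:
  fixes g :: "'a::euclidean_space \<Rightarrow> 'b::euclidean_space"
  assumes deriv: "(g has_derivative G) (at x)"
    and Phi: "\<And>x. \<Phi> x = (\<lambda>d. g x - d) ` D"
  shows "(\<eta>, -l) \<in> rnormal (gph \<Phi>) (x, y) \<longleftrightarrow> l \<in> rnormal D (g x - y) \<and> \<eta> = adjoint G l"
proof -
  have lin: "linear G"
    using deriv has_derivative_linear by blast
  show ?thesis
  proof
    assume normal: "(\<eta>, -l) \<in> rnormal (gph \<Phi>) (x, y)"
    have "((\<lambda>z. (x, g x - z)) has_derivative (\<lambda>h. (0, - h))) (at (g x - y))"
      by (auto intro!: derivative_eq_intros)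
    moreover have "g x - y \<in> D"
      using normal by (simp add: rnormal_def mem_gph_iff[OF Phi])
    ultimately have "l \<in> rnormal D (g x - y)"
    proof (rule rnormal_pullback)
      show "inner l h = inner (\<eta>, -l) (0, - h)" for h
        by simp
    qed (use normal in \<open>simp_all add: mem_gph_iff[OF Phi]\<close>)
    moreover have "\<eta> = adjoint G l"
    proof -
      have eq: "inner \<eta> h = inner l (G h)" for h
        using rnormal_gph_imp_inner_le[OF deriv Phi normal, of h]
          rnormal_gph_imp_inner_le[OF deriv Phi normal, of "- h"]
        by (simp add: linear_neg[OF lin])
      have "inner (\<eta> - adjoint G l) h = 0" for h
        by (simp add: inner_diff_left eq adjoint_clauses[OF lin])
      then show ?thesis
        using inner_eq_zero_iff[of "\<eta> - adjoint G l"] by auto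
    qed
    ultimately show "l \<in> rnormal D (g x - y) \<and> \<eta> = adjoint G l" ..
  next
    assume "l \<in> rnormal D (g x - y) \<and> \<eta> = adjoint G l"
    then have l: "l \<in> rnormal D (g (fst (x, y)) - snd (x, y))" and \<eta>: "\<eta> = adjoint G l"
      by simp_all
    have "((\<lambda>p. g (fst p)) has_derivative (\<lambda>p. G (fst p))) (at (x, y))"
      using has_derivative_compose[of fst fst "(x, y)" UNIV g G] deriv
      by (simp add: bounded_linear_fst bounded_linear_imp_has_derivative)
    then have "((\<lambda>p. g (fst p) - snd p) has_derivative (\<lambda>p. G (fst p) - snd p)) (at (x, y))"
      by (intro has_derivative_diff has_derivative_snd has_derivative_ident)
    moreover have "(x, y) \<in> gph \<Phi>"
      using l by (simp add: rnormal_def mem_gph_iff[OF Phi])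
    ultimately show "(\<eta>, -l) \<in> rnormal (gph \<Phi>) (x, y)"
      by (rule rnormal_pullback)
        (use l in \<open>auto simp: mem_gph_iff[OF Phi] \<eta> adjoint_works[OF lin] inner_diff_right inner_commute\<close>)
  qed
qed

lemma rcoderiv_iff:
  fixes g :: "'a::euclidean_space \<Rightarrow> 'b::euclidean_space"
  assumes "(g has_derivative G) (at x)" and "\<And>x. \<Phi> x = (\<lambda>d. g x - d) ` D"
  shows "\<eta> \<in> rcoderiv \<Phi> x y l \<longleftrightarrow> l \<in> rnormal D (g x - y) \<and> \<eta> = adjoint G l"
  unfolding rcoderiv_def mem_Collect_eq by (rule rnormal_gph_iff[OF assms])

lemma dlcoderiv_zero_imp_dlnormal:
  fixes g :: "'a::euclidean_space \<Rightarrow> 'b::euclidean_space"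
  assumes deriv: "\<And>x. (g has_derivative blinfun_apply (g' x)) (at x)"
    and cont: "isCont g' xb"
    and Phi: "\<And>x. \<Phi> x = (\<lambda>d. g x - d) ` D"
    and "0 \<in> dlcoderiv \<Phi> xb yb u 0 lam"
  shows "lam \<in> dlnormal D (g xb - yb) (g' xb u) \<and> adjoint (blinfun_apply (g' xb)) lam = 0"
proof -
  obtain t vs \<eta>s where t: "\<And>k. t k > 0" "t \<longlonglongrightarrow> 0" and vs: "vs \<longlonglongrightarrow> (u, 0)"
    and \<eta>s: "\<eta>s \<longlonglongrightarrow> (0, -lam)" and normal: "\<And>k. \<eta>s k \<in> rnormal (gph \<Phi>) ((xb, yb) + t k *\<^sub>R vs k)"
    using assms(4) unfolding dlcoderiv_def dlnormal_def by blast
  have fst_vs: "(\<lambda>k. fst (vs k)) \<longlonglongrightarrow> u" and snd_vs: "(\<lambda>k. snd (vs k)) \<longlonglongrightarrow> 0"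
    using tendsto_fst[OF vs] tendsto_snd[OF vs] by simp_all
  define xs where "xs = (\<lambda>k. xb + t k *\<^sub>R fst (vs k))"
  define ls where "ls = (\<lambda>k. - snd (\<eta>s k))"
  define ws where "ws = (\<lambda>k. (1 / t k) *\<^sub>R (g (xs k) - g xb) - snd (vs k))"
  have "\<eta>s k = (fst (\<eta>s k), - ls k)" "(xb, yb) + t k *\<^sub>R vs k = (xs k, yb + t k *\<^sub>R snd (vs k))" for k
    by (simp_all add: ls_def xs_def prod_eq_iff)
  then have "ls k \<in> rnormal D (g (xs k) - (yb + t k *\<^sub>R snd (vs k)))"
    and fst_\<eta>s: "fst (\<eta>s k) = adjoint (blinfun_apply (g' (xs k))) (ls k)" for k
    using normal[of k] rnormal_gph_iff[OF deriv[of "xs k"] Phi] by metis+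
  moreover have "g (xs k) - (yb + t k *\<^sub>R snd (vs k)) = (g xb - yb) + t k *\<^sub>R ws k" for k
    using t(1)[of k] by (simp add: ws_def xs_def scaleR_diff_right)
  moreover have "ws \<longlonglongrightarrow> g' xb u - 0"
    unfolding ws_def xs_def
    by (intro tendsto_diff has_derivative_imp_dir_quotient_tendsto[OF deriv t] fst_vs snd_vs)
  moreover have ls: "ls \<longlonglongrightarrow> lam"
    using tendsto_minus[OF tendsto_snd[OF \<eta>s]] by (simp add: ls_def)
  ultimately have "lam \<in> dlnormal D (g xb - yb) (g' xb u)"
    unfolding dlnormal_def using t by (intro CollectI exI[of _ t] exI[of _ ws] exI[of _ ls]) auto
  moreover have "adjoint (blinfun_apply (g' xb)) lam = 0"
  proof (rule LIMSEQ_unique)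
    have "xs \<longlonglongrightarrow> xb + 0 *\<^sub>R u"
      unfolding xs_def by (intro tendsto_intros t fst_vs)
    then show "(\<lambda>k. fst (\<eta>s k)) \<longlonglongrightarrow> adjoint (blinfun_apply (g' xb)) lam"
      unfolding fst_\<eta>s using cont by (intro tendsto_adjoint_blinfun ls) (simp add: isCont_tendsto_compose)
    show "(\<lambda>k. fst (\<eta>s k)) \<longlonglongrightarrow> 0"
      using tendsto_fst[OF \<eta>s] by simp
  qed
  ultimately show ?thesis ..
qed

lemma dlnormal_imp_dlcoderiv_zero:
  fixes g :: "'a::euclidean_space \<Rightarrow> 'b::euclidean_space"
  assumes deriv: "\<And>x. (g has_derivative blinfun_apply (g' x)) (at x)"
    and cont: "isCont g' xb"
    and Phi: "\<And>x. \<Phi> x = (\<lambda>d. g x - d) ` D"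
    and "lam \<in> dlnormal D (g xb - yb) (g' xb u)"
    and adj: "adjoint (blinfun_apply (g' xb)) lam = 0"
  shows "0 \<in> dlcoderiv \<Phi> xb yb u 0 lam"
proof -
  obtain t ws ls where t: "\<And>k. t k > 0" "t \<longlonglongrightarrow> 0" and ws: "ws \<longlonglongrightarrow> g' xb u"
    and ls: "ls \<longlonglongrightarrow> lam" and normal: "\<And>k. ls k \<in> rnormal D (g xb - yb + t k *\<^sub>R ws k)"
    using assms(4) unfolding dlnormal_def by blast
  define xs where "xs = (\<lambda>k. xb + t k *\<^sub>R u)"
  define vs where "vs = (\<lambda>k. (u, (1 / t k) *\<^sub>R (g (xs k) - g xb) - ws k))"
  define \<eta>s where "\<eta>s = (\<lambda>k. (adjoint (blinfun_apply (g' (xs k))) (ls k), - ls k))"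
  have "(\<lambda>k. (1 / t k) *\<^sub>R (g (xs k) - g xb) - ws k) \<longlonglongrightarrow> g' xb u - g' xb u"
    unfolding xs_def by (intro tendsto_diff has_derivative_imp_dir_quotient_tendsto[OF deriv t] ws tendsto_const)
  then have "vs \<longlonglongrightarrow> (u, 0)"
    unfolding vs_def by (intro tendsto_Pair) auto
  moreover have "\<eta>s \<longlonglongrightarrow> (0, - lam)"
  proof -
    have "xs \<longlonglongrightarrow> xb + 0 *\<^sub>R u"
      unfolding xs_def by (intro tendsto_intros t)
    then have "(\<lambda>k. adjoint (blinfun_apply (g' (xs k))) (ls k)) \<longlonglongrightarrow> adjoint (blinfun_apply (g' xb)) lam"
      using cont by (intro tendsto_adjoint_blinfun ls) (simp add: isCont_tendsto_compose)
    then show ?thesis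
      unfolding \<eta>s_def adj by (intro tendsto_Pair tendsto_minus ls)
  qed
  moreover have "\<eta>s k \<in> rnormal (gph \<Phi>) ((xb, yb) + t k *\<^sub>R vs k)" for k
  proof -
    have "(xb, yb) + t k *\<^sub>R vs k = (xs k, g (xs k) - (g xb - yb + t k *\<^sub>R ws k))"
      using t(1)[of k] by (simp add: vs_def xs_def algebra_simps)
    moreover have "g (xs k) - (g (xs k) - (g xb - yb + t k *\<^sub>R ws k)) = g xb - yb + t k *\<^sub>R ws k"
      by simp
    ultimately show ?thesis
      using normal[of k] unfolding \<eta>s_def by (simp only: rnormal_gph_iff[OF deriv[of "xs k"] Phi] simp_thms)
  qed
  ultimately show ?thesis
    unfolding dlcoderiv_def dlnormal_def using t by blast
qed

lemma graph_quotient_tendsto_iff: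
  assumes deriv: "(g has_derivative G) (at xb)"
    and xs: "\<And>k. xs k \<noteq> xb" "xs \<longlonglongrightarrow> xb"
    and dir: "(\<lambda>k. (1 / norm (xs k - xb)) *\<^sub>R (xs k - xb)) \<longlonglongrightarrow> u"
    and ys: "\<And>k. ys k = g (xs k) - zs k"
  shows "(\<lambda>k. (1 / norm (xs k - xb)) *\<^sub>R (ys k - yb)) \<longlonglongrightarrow> 0 \<longleftrightarrow>
    (\<lambda>k. (1 / norm (xs k - xb)) *\<^sub>R (zs k - (g xb - yb))) \<longlonglongrightarrow> G u"
proof -
  define q where "q = (\<lambda>k. (1 / norm (xs k - xb)) *\<^sub>R (g (xs k) - g xb))"
  have q: "q \<longlonglongrightarrow> G u"
    unfolding q_def by (rule has_derivative_imp_seq_quotient_tendsto[OF deriv xs dir])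
  have split: "(1 / norm (xs k - xb)) *\<^sub>R (ys k - yb) = q k - (1 / norm (xs k - xb)) *\<^sub>R (zs k - (g xb - yb))"
    and split': "(1 / norm (xs k - xb)) *\<^sub>R (zs k - (g xb - yb)) = q k - (1 / norm (xs k - xb)) *\<^sub>R (ys k - yb)" for k
    by (simp_all add: q_def ys algebra_simps)
  show ?thesis
  proof
    assume "(\<lambda>k. (1 / norm (xs k - xb)) *\<^sub>R (ys k - yb)) \<longlonglongrightarrow> 0"
    from tendsto_diff[OF q this] show "(\<lambda>k. (1 / norm (xs k - xb)) *\<^sub>R (zs k - (g xb - yb))) \<longlonglongrightarrow> G u"
      by (simp add: split')
  next
    assume "(\<lambda>k. (1 / norm (xs k - xb)) *\<^sub>R (zs k - (g xb - yb))) \<longlonglongrightarrow> G u"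
    from tendsto_diff[OF q this] show "(\<lambda>k. (1 / norm (xs k - xb)) *\<^sub>R (ys k - yb)) \<longlonglongrightarrow> 0"
      by (simp add: split)
  qed
qed

definition sign_compatible :: "(nat \<Rightarrow> 'b::real_inner) \<Rightarrow> nat \<Rightarrow> 'b \<Rightarrow> 'b \<Rightarrow> bool" where
  "sign_compatible e m lam y \<longleftrightarrow>
    (\<forall>i<m. inner lam (e i) \<noteq> 0 \<longrightarrow> inner lam (e i) * inner y (e i) > 0)"

lemma coderiv_sequences_iff_normal_sequences:
  fixes g :: "'a::euclidean_space \<Rightarrow> 'b::euclidean_space"
  assumes deriv: "\<And>x. (g has_derivative blinfun_apply (g' x)) (at x)"
    and cont: "isCont g' xb"
    and Phi: "\<And>x. \<Phi> x = (\<lambda>d. g x - d) ` D"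
    and adj: "adjoint (blinfun_apply (g' xb)) lam = 0"
  shows "(\<exists>xs ys lams \<eta>s.
           (\<forall>k. (xs k, ys k) \<in> gph \<Phi> \<and> xs k \<noteq> xb) \<and>
           xs \<longlonglongrightarrow> xb \<and> ys \<longlonglongrightarrow> yb \<and> lams \<longlonglongrightarrow> lam \<and> \<eta>s \<longlonglongrightarrow> 0 \<and>
           (\<lambda>k. (1 / norm (xs k - xb)) *\<^sub>R (xs k - xb)) \<longlonglongrightarrow> u \<and>
           (\<lambda>k. (1 / norm (xs k - xb)) *\<^sub>R (ys k - yb)) \<longlonglongrightarrow> 0 \<and>
           (\<forall>k. \<eta>s k \<in> rcoderiv \<Phi> (xs k) (ys k) (lams k)) \<and>
           (\<forall>k. sign_compatible e m lam (ys k - yb)))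
    \<longleftrightarrow> (\<exists>xs zs lams.
           (\<forall>k. xs k \<noteq> xb \<and> zs k \<in> D) \<and>
           xs \<longlonglongrightarrow> xb \<and> zs \<longlonglongrightarrow> g xb - yb \<and> lams \<longlonglongrightarrow> lam \<and>
           (\<lambda>k. (1 / norm (xs k - xb)) *\<^sub>R (xs k - xb)) \<longlonglongrightarrow> u \<and>
           (\<lambda>k. (1 / norm (xs k - xb)) *\<^sub>R (zs k - (g xb - yb))) \<longlonglongrightarrow> g' xb u \<and>
           (\<forall>k. lams k \<in> rnormal D (zs k)) \<and>
           (\<forall>k. sign_compatible e m lam (g (xs k) - zs k - yb)))"
    (is "?coderiv \<longleftrightarrow> ?normal")
proof
  assume ?coderiv
  then obtain xs ys lams \<eta>s where xs: "\<And>k. xs k \<noteq> xb" "xs \<longlonglongrightarrow> xb" and ys: "ys \<longlonglongrightarrow> yb"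
    and lams: "lams \<longlonglongrightarrow> lam"
    and dir: "(\<lambda>k. (1 / norm (xs k - xb)) *\<^sub>R (xs k - xb)) \<longlonglongrightarrow> u"
    and quot: "(\<lambda>k. (1 / norm (xs k - xb)) *\<^sub>R (ys k - yb)) \<longlonglongrightarrow> 0"
    and coderiv: "\<And>k. \<eta>s k \<in> rcoderiv \<Phi> (xs k) (ys k) (lams k)" and sign: "\<And>k. sign_compatible e m lam (ys k - yb)"
    by blast
  define zs where "zs = (\<lambda>k. g (xs k) - ys k)"
  have normal: "lams k \<in> rnormal D (zs k)" for k
    using coderiv[of k] rcoderiv_iff[OF deriv Phi] by (simp add: zs_def)
  have "(\<lambda>k. g (xs k)) \<longlonglongrightarrow> g xb"
    using deriv[of xb] has_derivative_continuous isCont_tendsto_compose xs(2) by blast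
  then have "zs \<longlonglongrightarrow> g xb - yb"
    unfolding zs_def using ys by (rule tendsto_diff)
  moreover have "(\<lambda>k. (1 / norm (xs k - xb)) *\<^sub>R (zs k - (g xb - yb))) \<longlonglongrightarrow> g' xb u"
    using quot graph_quotient_tendsto_iff[OF deriv xs dir, of ys zs yb] by (simp add: zs_def)
  moreover have "zs k \<in> D" for k
    using normal[of k] by (simp add: rnormal_def)
  ultimately show ?normal
    using xs lams dir normal sign by (intro exI[of _ xs] exI[of _ zs] exI[of _ lams]) (simp add: zs_def)
next
  assume ?normal
  then obtain xs zs lams where xs: "\<And>k. xs k \<noteq> xb" "xs \<longlonglongrightarrow> xb" and zs: "zs \<longlonglongrightarrow> g xb - yb"
    and lams: "lams \<longlonglongrightarrow> lam" and dir: "(\<lambda>k. (1 / norm (xs k - xb)) *\<^sub>R (xs k - xb)) \<longlonglongrightarrow> u"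
    and quot: "(\<lambda>k. (1 / norm (xs k - xb)) *\<^sub>R (zs k - (g xb - yb))) \<longlonglongrightarrow> g' xb u"
    and normal: "\<And>k. lams k \<in> rnormal D (zs k)" and sign: "\<And>k. sign_compatible e m lam (g (xs k) - zs k - yb)"
    by blast
  define ys where "ys = (\<lambda>k. g (xs k) - zs k)"
  define \<eta>s where "\<eta>s = (\<lambda>k. adjoint (blinfun_apply (g' (xs k))) (lams k))"
  have "(\<lambda>k. g (xs k)) \<longlonglongrightarrow> g xb"
    using deriv[of xb] has_derivative_continuous isCont_tendsto_compose xs(2) by blast
  from tendsto_diff[OF this zs] have "ys \<longlonglongrightarrow> yb"
    by (simp add: ys_def)
  moreover have "\<eta>s \<longlonglongrightarrow> 0"
    unfolding \<eta>s_def adj[symmetric] using cont xs(2)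
    by (intro tendsto_adjoint_blinfun lams) (simp add: isCont_tendsto_compose)
  moreover have "(\<lambda>k. (1 / norm (xs k - xb)) *\<^sub>R (ys k - yb)) \<longlonglongrightarrow> 0"
    using quot graph_quotient_tendsto_iff[OF deriv xs dir, of ys zs yb] by (simp add: ys_def)
  moreover have "(xs k, ys k) \<in> gph \<Phi>" "\<eta>s k \<in> rcoderiv \<Phi> (xs k) (ys k) (lams k)" for k
    using normal[of k] by (simp_all add: ys_def \<eta>s_def rnormal_def mem_gph_iff[OF Phi] rcoderiv_iff[OF deriv Phi])
  ultimately show ?coderiv
    using xs lams dir sign by (intro exI[of _ xs] exI[of _ ys] exI[of _ lams] exI[of _ \<eta>s]) (simp add: ys_def)
qed

lemma dlcoderiv_zero_iff:
  fixes g :: "'a::euclidean_space \<Rightarrow> 'b::euclidean_space"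
  assumes "\<And>x. (g has_derivative blinfun_apply (g' x)) (at x)"
    and "isCont g' xb"
    and "\<And>x. \<Phi> x = (\<lambda>d. g x - d) ` D"
  shows "0 \<in> dlcoderiv \<Phi> xb yb u 0 lam \<longleftrightarrow>
    lam \<in> dlnormal D (g xb - yb) (g' xb u) \<and> adjoint (blinfun_apply (g' xb)) lam = 0"
  using dlcoderiv_zero_imp_dlnormal[OF assms] dlnormal_imp_dlcoderiv_zero[OF assms] by blast

lemma quasi_normal_dir_iff:
  fixes g :: "'a::euclidean_space \<Rightarrow> 'b::euclidean_space"
  assumes deriv: "\<And>x. (g has_derivative blinfun_apply (g' x)) (at x)"
    and cont: "isCont g' xb"
    and Phi: "\<And>x. \<Phi> x = (\<lambda>d. g x - d) ` D"
  shows "quasi_normal_dir \<Phi> xb yb u e m \<longleftrightarrow>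
    \<not> (\<exists>lam. lam \<noteq> 0 \<and> lam \<in> dlnormal D (g xb - yb) (g' xb u) \<and>
          adjoint (blinfun_apply (g' xb)) lam = 0 \<and>
          (\<exists>xs zs lams.
             (\<forall>k. xs k \<noteq> xb \<and> zs k \<in> D) \<and>
             xs \<longlonglongrightarrow> xb \<and> zs \<longlonglongrightarrow> g xb - yb \<and> lams \<longlonglongrightarrow> lam \<and>
             (\<lambda>k. (1 / norm (xs k - xb)) *\<^sub>R (xs k - xb)) \<longlonglongrightarrow> u \<and>
             (\<lambda>k. (1 / norm (xs k - xb)) *\<^sub>R (zs k - (g xb - yb))) \<longlonglongrightarrow> g' xb u \<and>
             (\<forall>k. lams k \<in> rnormal D (zs k)) \<and>
             (\<forall>k. \<forall>i<m. inner lam (e i) \<noteq> 0 \<longrightarrow>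
                inner lam (e i) * inner (g (xs k) - zs k - yb) (e i) > 0)))"
  unfolding quasi_normal_dir_def sign_compatible_def[symmetric] dlcoderiv_zero_iff[OF deriv cont Phi]
  by (simp only: conj_assoc coderiv_sequences_iff_normal_sequences[OF deriv cont Phi] cong: conj_cong)

theorem mainTheorem6:
  fixes g :: "'a::euclidean_space \<Rightarrow> 'b::euclidean_space"
    and g' :: "'a \<Rightarrow> 'a \<Rightarrow>\<^sub>L 'b"
    and D :: "'b set" and \<Phi> :: "'a \<Rightarrow> 'b set"
    and xb u :: 'a and e :: "nat \<Rightarrow> 'b" and m :: nat
  assumes deriv: "\<And>x. (g has_derivative blinfun_apply (g' x)) (at x)"
    and cont: "continuous_on UNIV g'"
    and closedD: "closed D"
    and Phi_def: "\<And>x. \<Phi> x = (\<lambda>d. g x - d) ` D"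
    and in_gph: "(xb, 0) \<in> gph \<Phi>"
    and unit: "norm u = 1"
    and m_dim: "m = DIM('b)"
    and orthonormal: "\<And>i j. i < m \<Longrightarrow> j < m \<Longrightarrow> inner (e i) (e j) = (if i = j then 1 else 0)"
  shows "quasi_normal_dir \<Phi> xb 0 u e m \<longleftrightarrow>
    \<not> (\<exists>lam. lam \<noteq> 0 \<and> lam \<in> dlnormal D (g xb) (g' xb u) \<and>
          adjoint (blinfun_apply (g' xb)) lam = 0 \<and>
          (\<exists>xs zs lams.
             (\<forall>k. xs k \<noteq> xb \<and> zs k \<in> D) \<and>
             xs \<longlonglongrightarrow> xb \<and> zs \<longlonglongrightarrow> g xb \<and> lams \<longlonglongrightarrow> lam \<and>
             (\<lambda>k. (1 / norm (xs k - xb)) *\<^sub>R (xs k - xb)) \<longlonglongrightarrow> u \<and>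
             (\<lambda>k. (1 / norm (xs k - xb)) *\<^sub>R (zs k - g xb)) \<longlonglongrightarrow> g' xb u \<and>
             (\<forall>k. lams k \<in> rnormal D (zs k)) \<and>
             (\<forall>k. \<forall>i<m. inner lam (e i) \<noteq> 0 \<longrightarrow> inner lam (e i) * inner (g (xs k) - zs k) (e i) > 0)))"
proof -
  have "isCont g' xb"
    using cont by (simp add: continuous_on_eq_continuous_at)
  from quasi_normal_dir_iff[OF deriv this Phi_def, where yb=0]
  show ?thesis
    by simp
qed

end
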